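(* Let $F(x)=\sum_{n\ge 1} f(n)x^n$ be a formal power series with $f(1)\neq 0$ and composita $F^{\Delta}(n,k)$ (so $F^{\Delta}(1,1)=f(1)$), and let $A(x)$ be its reverse (compositional inverse) series, i.e. the formal power series with $A(0)=0$ and $F(A(x))=x$. Then the composita of $A$ is, for $n\ge m\ge 1$, $$A^{\Delta}(n,m)=\begin{cases}\dfrac{1}{F^{\Delta}(1,1)^n}, & n=m,\\[6pt] \dfrac{m}{n\,F^{\Delta}(1,1)^n}\displaystyle\sum_{k=1}^{n-m}\binom{n+k-1}{n-1}\sum_{j=1}^{k}\frac{(-1)^j}{F^{\Delta}(1,1)^j}\binom{k}{j}F^{\Delta}(n-m+j,j), & n>m.\end{cases}$$
   Context: All generating functions are formal power series in $x$. For a power series $F(x)=\sum_{n\ge 1} f(n)x^n$ with zero constant term, its composita is the two-variable function $F^{\Delta}(n,k)$ ($n\ge k\ge 1$) defined by $F^{\Delta}(n,k)=\sum_{\lambda_1+\cdots+\lambda_k=n}f(\lambda_1)f(\lambda_2)\cdots f(\lambda_k)$, where the sum runs over all compositions of $n$ into exactly $k$ positive integer parts; equivalently $[F(x)]^k=\sum_{n\ge k}F^{\Delta}(n,k)x^n$. *)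

theory Defs
  imports "HOL-Computational_Algebra.Formal_Power_Series"
begin

definition compositions :: "nat \<Rightarrow> nat \<Rightarrow> nat list set" where
  "compositions n k = {ls. length ls = k \<and> (\<forall>x\<in>set ls. 0 < x) \<and> sum_list ls = n}"

definition composita :: "'a::comm_ring_1 fps \<Rightarrow> nat \<Rightarrow> nat \<Rightarrow> 'a" where
  "composita F n k = (\<Sum>ls\<in>compositions n k. prod_list (map (fps_nth F) ls))"

end

theory Submission
  imports Defs "HOL-Computational_Algebra.Formal_Laurent_Series"
begin

(* Proof plan.
   1. The composita is a coefficient of a power: composita F n k = [x^n] F^k.
   2. Lagrange inversion, in residue form: if F(0) = 0 and F'(0) \<noteq> 0, then for
      every power series B, n [x^n] B = res((B o F)' / F^n), computed in formal
      Laurent series.  Truncating B after x^n gives B o F = sum_{k\<le>n} b_k F^k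
      + F^(n+1) T; after differentiating and dividing by F^n the remainder is a
      power series (residue 0) and res(F' F^(k-1-n)) is 1 for k = n and 0
      otherwise, since F' / F^j is a derivative for j \<ge> 2.
   3. Applied to B = A^m, where A o F = x, and writing F = x G, this gives
      n [x^n] A^m = m [x^(n-m)] G^(-n).
   4. Writing G = a (1 + H) with a = F'(0), we have G^(-n) = a^(-n) (1+H)^(-n);
      expanding (1+H)^(-n) by the binomial series and H^k by the binomial
      theorem expresses [x^d] G^(-n) through [x^d] G^j = composita F (d+j) j. *)

unbundle fps_syntax

section \<open>The composita as a coefficient of a power\<close>

lemma compositions_0: "compositions n 0 = (if n = 0 then {[]} else {})"
  by (auto simp: compositions_def)

lemma compositions_Suc:
  "compositions n (Suc k) = (\<Union>l\<in>{1..n}. (#) l ` compositions (n - l) k)"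
proof (intro equalityI subsetI)
  fix ls assume "ls \<in> compositions n (Suc k)"
  then obtain l xs where "ls = l # xs" "length xs = k" "0 < l" "\<forall>x\<in>set xs. 0 < x"
      "l + sum_list xs = n"
    by (cases ls) (auto simp: compositions_def)
  then show "ls \<in> (\<Union>l\<in>{1..n}. (#) l ` compositions (n - l) k)"
    by (auto simp: compositions_def intro!: bexI[of _ l])
qed (auto simp: compositions_def)

lemma finite_compositions: "finite (compositions n k)"
  by (induction k arbitrary: n) (auto simp: compositions_0 compositions_Suc)

lemma composita_power:
  fixes F :: "'a::comm_ring_1 fps"
  assumes F0: "F $ 0 = 0"
  shows "composita F n k = (F ^ k) $ n"
proof (induction k arbitrary: n)
  case 0
  then show ?case by (simp add: composita_def compositions_0)
next
  case (Suc k)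
  have "composita F n (Suc k) =
      (\<Sum>l\<in>{1..n}. \<Sum>ls\<in>(#) l ` compositions (n - l) k. prod_list (map (fps_nth F) ls))"
    unfolding composita_def compositions_Suc
    by (rule sum.UNION_disjoint) (auto simp: finite_compositions)
  also have "\<dots> = (\<Sum>l\<in>{1..n}. F $ l * composita F (n - l) k)"
    by (auto simp: sum.reindex composita_def sum_distrib_left intro!: sum.cong)
  also have "\<dots> = (\<Sum>l=0..n. F $ l * (F ^ k) $ (n - l))"
    using Suc F0 by (simp add: sum.atLeast_Suc_atMost)
  also have "\<dots> = (F ^ Suc k) $ n" by (simp add: fps_mult_nth)
  finally show ?case .
qed

lemma composita_shift:
  fixes F :: "'a::comm_ring_1 fps"
  assumes F0: "F $ 0 = 0"
  shows "composita F (d + j) j = (fps_shift 1 F ^ j) $ d"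
proof -
  have "F = fps_shift 1 F * fps_X"
    using F0 by (intro fps_ext) (simp add: fps_X_mult_right_nth)
  then have "composita F (d + j) j = (fps_shift 1 F ^ j * fps_X ^ j) $ (d + j)"
    using composita_power[OF F0] by (metis power_mult_distrib)
  then show ?thesis by (simp add: fps_X_power_mult_right_nth)
qed

section \<open>Lagrange inversion via residues\<close>

lemma fps_compose_inverse_commute:
  fixes F A :: "'a::field fps"
  assumes F0: "F $ 0 = 0" and F1: "F $ 1 \<noteq> 0" and A0: "A $ 0 = 0"
    and inv: "F oo A = fps_X"
  shows "A oo F = fps_X"
proof -
  have "fps_inv F = (fps_inv F oo F) oo A"
    using inv fps_compose_assoc[OF A0 F0] by simp
  also have "\<dots> = A" using fps_inv[OF F0 F1] A0 by simp
  finally show ?thesis using fps_inv[OF F0 F1] by simp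
qed

lemma fps_compose_truncation:
  fixes B F :: "'a::field fps"
  assumes F0: "F $ 0 = 0"
  shows "B oo F = (\<Sum>k=0..N. fps_const (B $ k) * F ^ k) + F ^ Suc N * (fps_shift (Suc N) B oo F)"
proof -
  have low: "(\<Sum>k=0..N. fps_const (B $ k) * fps_X ^ k) $ i = (if i \<le> N then B $ i else 0)" for i
    by (simp add: fps_sum_nth fps_X_power_nth if_distrib[of "\<lambda>x. _ * x"] sum.delta cong: if_cong)
  have trunc: "B = (\<Sum>k=0..N. fps_const (B $ k) * fps_X ^ k) + fps_shift (Suc N) B * fps_X ^ Suc N"
    by (rule fps_ext) (simp add: low fps_X_power_mult_right_nth del: power_Suc)
  show ?thesis
    by (subst trunc)
      (simp add: fps_compose_add_distrib fps_compose_sum_distrib fps_compose_mult_distrib[OF F0]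
        fps_compose_power[OF F0, symmetric] F0 mult.commute)
qed

lemma fps_deriv_compose_truncation:
  fixes B F :: "'a::field fps"
  assumes F0: "F $ 0 = 0"
  obtains Q where "fps_deriv (B oo F) =
    (\<Sum>k=1..n. fps_const (of_nat k * B $ k) * fps_deriv F * F ^ (k - 1)) + F ^ n * Q"
proof
  define T where "T = fps_shift (Suc n) B oo F"
  have "fps_deriv (\<Sum>k=0..n. fps_const (B $ k) * F ^ k) =
      (\<Sum>k=0..n. fps_const (of_nat k * B $ k) * fps_deriv F * F ^ (k - 1))"
    by (simp add: fps_deriv_sum fps_deriv_power algebra_simps flip: fps_const_mult)
  also have "\<dots> = (\<Sum>k=1..n. fps_const (of_nat k * B $ k) * fps_deriv F * F ^ (k - 1))"
    by (simp add: sum.atLeast_Suc_atMost)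
  finally have low: "fps_deriv (\<Sum>k=0..n. fps_const (B $ k) * F ^ k) = \<dots>" .
  have high: "fps_deriv (F ^ Suc n * T) =
      F ^ n * (fps_const (of_nat (Suc n)) * fps_deriv F * T + F * fps_deriv T)"
    by (simp only: fps_deriv_mult fps_deriv_power) (simp add: algebra_simps)
  show "fps_deriv (B oo F) = (\<Sum>k=1..n. fps_const (of_nat k * B $ k) * fps_deriv F * F ^ (k - 1))
      + F ^ n * (fps_const (of_nat (Suc n)) * fps_deriv F * T + F * fps_deriv T)"
    using fps_compose_truncation[OF F0, of B n] low high by (simp add: T_def)
qed

lemma fps_to_fls_sum: "fps_to_fls (sum g S) = (\<Sum>x\<in>S. fps_to_fls (g x))"
  by (induction S rule: infinite_finite_induct) auto

lemma fls_residue_sum: "fls_residue (sum g S) = (\<Sum>x\<in>S. fls_residue (g x))"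
  by (induction S rule: infinite_finite_induct) (auto simp del: fls_residue_def simp: fls_residue_add, simp_all)

(* res(f' / f^j) is 1 for j = 1 and 0 for j \<ge> 2, when f has a simple zero:
   for j \<ge> 2 the integrand is the derivative of -f^(1-j)/(j-1). *)
lemma fls_residue_deriv_times_inverse_power:
  fixes f :: "'a::field_char_0 fls"
  assumes sd: "fls_subdegree f = 1" and j: "j \<ge> 1"
  shows "fls_residue (fls_deriv f * inverse f ^ j) = (if j = 1 then 1 else 0)"
proof (cases "j = 1")
  case True
  then show ?thesis using fls_residue_deriv_times_inverse_eq_subdegree(1)[of f] sd by simp
next
  case False
  then obtain p where p: "j = Suc p" "p \<ge> 1" using j by (cases j) auto
  have "fls_deriv (inverse f ^ p) = of_nat p * inverse f ^ (p - 1) * (- fls_deriv f * inverse f ^ 2)"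
    by (simp add: fls_deriv_power fls_inverse_deriv)
  also have "\<dots> = - (of_nat p * (fls_deriv f * inverse f ^ j))"
    using p by (cases p) (auto simp: algebra_simps power2_eq_square)
  finally have "fls_deriv (inverse f ^ p) = - (of_nat p * (fls_deriv f * inverse f ^ j))" .
  moreover have "fls_const (inverse (of_nat p)) * of_nat p = (1::'a fls)"
    using p by (simp add: fls_of_nat fls_const_mult_const)
  ultimately have "fls_deriv f * inverse f ^ j = - fls_const (inverse (of_nat p)) * fls_deriv (inverse f ^ p)"
    by (simp add: mult.assoc[symmetric])
  then show ?thesis using False by (simp only: fls_residue_fls_const_times mult_minus_left) simp
qed

lemma lagrange_residue:
  fixes B F :: "'a::field_char_0 fps"
  assumes F0: "F $ 0 = 0" and F1: "F $ 1 \<noteq> 0"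
  shows "of_nat n * B $ n = fls_residue (fps_to_fls (fps_deriv (B oo F)) * inverse (fps_to_fls F) ^ n)"
proof -
  define f where "f = fps_to_fls F"
  have "subdegree F = 1" by (rule subdegreeI) (use F0 F1 in auto)
  then have sdf: "fls_subdegree f = 1" by (simp add: f_def fls_subdegree_fls_to_fps)
  then have f0: "f \<noteq> 0" by auto
  obtain Q where Q: "fps_deriv (B oo F) =
      (\<Sum>k=1..n. fps_const (of_nat k * B $ k) * fps_deriv F * F ^ (k - 1)) + F ^ n * Q"
    using fps_deriv_compose_truncation[OF F0] .
  have low: "fls_residue (fps_to_fls (fps_const (of_nat k * B $ k) * fps_deriv F * F ^ (k - 1))
      * inverse f ^ n) = (if k = n then of_nat n * B $ n else 0)" if k: "k \<in> {1..n}" for k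
  proof -
    have "n = (k - 1) + (n - k + 1)" using k by simp
    then have "inverse f ^ n = inverse f ^ (k - 1) * inverse f ^ (n - k + 1)"
      by (metis power_add)
    then have "f ^ (k - 1) * inverse f ^ n = inverse f ^ (n - k + 1)"
      using f0 by (simp add: mult.assoc[symmetric] flip: power_mult_distrib)
    then have "fps_to_fls (fps_const (of_nat k * B $ k) * fps_deriv F * F ^ (k - 1)) * inverse f ^ n
        = fls_const (of_nat k * B $ k) * (fls_deriv f * inverse f ^ (n - k + 1))"
      by (simp add: f_def fls_times_fps_to_fls fps_to_fls_power fls_deriv_fps_to_fls mult.assoc)
    then show ?thesis
      using fls_residue_deriv_times_inverse_power[OF sdf, of "n - k + 1"] k
      by (auto simp del: fls_residue_def simp: fls_residue_fls_const_times)
  qed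
  have high: "fls_residue (fps_to_fls (F ^ n * Q) * inverse f ^ n) = 0"
    using f0 by (simp add: f_def fls_times_fps_to_fls fps_to_fls_power mult_ac flip: power_mult_distrib)
  have "fls_residue (fps_to_fls (fps_deriv (B oo F)) * inverse f ^ n) = (\<Sum>k=1..n.
      fls_residue (fps_to_fls (fps_const (of_nat k * B $ k) * fps_deriv F * F ^ (k - 1)) * inverse f ^ n))"
    unfolding Q fps_to_fls_plus distrib_right fls_residue_add high fps_to_fls_sum sum_distrib_right
      fls_residue_sum by simp
  also have "\<dots> = (\<Sum>k=1..n. if k = n then of_nat n * B $ n else 0)"
    by (rule sum.cong[OF refl low])
  finally have "fls_residue (fps_to_fls (fps_deriv (B oo F)) * inverse f ^ n) = \<dots>" .
  then show ?thesis by (cases n) (simp_all add: f_def)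
qed

lemma fls_residue_X_power_times_inverse:
  fixes G :: "'a::field fps"
  assumes G0: "G $ 0 \<noteq> 0" and j: "j < n"
  shows "fls_residue (fls_X ^ j * inverse (fps_to_fls (fps_X * G)) ^ n) = (inverse G ^ n) $ (n - Suc j)"
proof -
  have "inverse (fps_to_fls (fps_X * G)) = fls_X_inv * fps_to_fls (inverse G)"
    using G0 by (simp add: fls_times_fps_to_fls fls_inverse_fps_to_fls fls_inverse_X)
  then have shift: "fls_X ^ j * inverse (fps_to_fls (fps_X * G)) ^ n
      = fls_shift (int n - int j) (fps_to_fls (inverse G ^ n))"
    by (simp add: power_mult_distrib fps_to_fls_power fls_X_power_times_conv_shift
        fls_X_inv_power_times_conv_shift mult.assoc[symmetric])
  have index: "-1 + (int n - int j) = int (n - Suc j)" using j by simp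
  show ?thesis
    unfolding shift fls_residue_def fls_shift_nth index fps_to_fls_nth by simp
qed

lemma lagrange_inversion:
  fixes F A :: "'a::field_char_0 fps"
  assumes F0: "F $ 0 = 0" and F1: "F $ 1 \<noteq> 0" and A0: "A $ 0 = 0"
    and inv: "F oo A = fps_X" and m: "1 \<le> m" "m \<le> n"
  shows "of_nat n * (A ^ m) $ n = of_nat m * (inverse (fps_shift 1 F) ^ n) $ (n - m)"
proof -
  define G where "G = fps_shift 1 F"
  have FG: "F = fps_X * G"
    using F0 by (intro fps_ext) (simp add: G_def)
  have G0: "G $ 0 \<noteq> 0" using F1 by (simp add: G_def)
  have "A ^ m oo F = fps_X ^ m"
    using fps_compose_power[OF F0, of A m] fps_compose_inverse_commute[OF F0 F1 A0 inv] by simp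
  then have "of_nat n * (A ^ m) $ n =
      fls_residue (fps_to_fls (fps_deriv (fps_X ^ m)) * inverse (fps_to_fls F) ^ n)"
    using lagrange_residue[OF F0 F1, of n "A ^ m"] by simp
  also have "fps_deriv (fps_X ^ m) = fps_const (of_nat m) * (fps_X ^ (m - 1) :: 'a fps)"
    by (simp only: fps_deriv_power) simp
  also have "fps_to_fls \<dots> = fls_const (of_nat m) * fls_X ^ (m - 1)"
    by (simp add: fls_times_fps_to_fls fps_to_fls_power)
  also have "fls_residue (fls_const (of_nat m) * fls_X ^ (m - 1) * inverse (fps_to_fls F) ^ n)
      = of_nat m * (inverse G ^ n) $ (n - m)"
    using fls_residue_X_power_times_inverse[OF G0, of "m - 1" n] m
    unfolding mult.assoc fls_residue_fls_const_times by (simp add: FG del: fls_residue_def)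
  finally show ?thesis by (simp add: G_def)
qed

section \<open>Coefficients of a negative power\<close>

lemma inverse_power_as_binomial_compose:
  fixes G :: "'a::field_char_0 fps"
  assumes G0: "G $ 0 \<noteq> 0"
  defines "H \<equiv> fps_const (inverse (G $ 0)) * G - 1"
  shows "inverse G ^ n = fps_const (inverse (G $ 0) ^ n) * (fps_binomial (- of_nat n) oo H)"
proof -
  have H0: "H $ 0 = 0" using G0 by (simp add: H_def)
  have GH: "G = fps_const (G $ 0) * (1 + H)" using G0 by (simp add: H_def algebra_simps)
  have "fps_binomial (- of_nat n) oo H = inverse ((1 + fps_X) ^ n) oo H"
    by (simp add: fps_binomial_minus_of_nat)
  also have "\<dots> = inverse ((1 + fps_X) ^ n oo H)"
    by (rule fps_inverse_compose[OF H0]) simp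
  also have "(1 + fps_X) ^ n oo H = (1 + H) ^ n"
    by (simp add: fps_compose_power[OF H0, symmetric] fps_compose_add_distrib H0)
  finally have "fps_binomial (- of_nat n) oo H = inverse ((1 + H) ^ n)" .
  moreover have "inverse G ^ n = fps_const (inverse (G $ 0) ^ n) * inverse ((1 + H) ^ n)"
    by (subst GH) (simp add: fps_inverse_mult power_mult_distrib fps_inverse_power
        fps_const_inverse[symmetric] fps_const_power[symmetric] del: fps_const_power)
  ultimately show ?thesis by simp
qed

lemma fps_scaled_minus_one_power_nth:
  fixes G :: "'a::comm_ring_1 fps"
  shows "((fps_const c * G - 1) ^ k) $ d = (\<Sum>j\<le>k. of_nat (k choose j) * (-1) ^ (k - j) * c ^ j * (G ^ j) $ d)"
proof -
  have "(fps_const c * G - 1) ^ k = (fps_const c * G + (-1)) ^ k" by simp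
  also have "\<dots> = (\<Sum>j\<le>k. of_nat (k choose j) * (fps_const c * G) ^ j * (-1) ^ (k - j))"
    by (rule binomial_ring)
  also have "\<dots> = (\<Sum>j\<le>k. fps_const (of_nat (k choose j) * (-1) ^ (k - j) * c ^ j) * G ^ j)"
  proof (rule sum.cong[OF refl])
    fix j
    have "(-1::'a fps) = fps_const (-1)" by simp
    then show "of_nat (k choose j) * (fps_const c * G) ^ j * (-1) ^ (k - j) =
        fps_const (of_nat (k choose j) * (-1) ^ (k - j) * c ^ j) * G ^ j"
      by (simp only: fps_of_nat[symmetric] power_mult_distrib fps_const_power fps_const_mult[symmetric] mult_ac)
  qed
  finally show ?thesis by (simp add: fps_sum_nth)
qed

lemma minus_one_power_diff: "j \<le> k \<Longrightarrow> (-1::'a::comm_ring_1) ^ k * (-1) ^ (k - j) = (-1) ^ j"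
proof -
  assume "j \<le> k"
  then have "k + (k - j) = j + 2 * (k - j)" by simp
  then have "(-1::'a) ^ k * (-1) ^ (k - j) = (-1) ^ (j + 2 * (k - j))" by (metis power_add)
  then show ?thesis by (simp add: power_add power_mult)
qed

lemma gbinomial_minus_of_nat:
  assumes "n \<ge> 1"
  shows "((- of_nat n :: 'a::field_char_0) gchoose k) = (-1) ^ k * of_nat ((n + k - 1) choose (n - 1))"
proof -
  have "((- of_nat n :: 'a) gchoose k) = (-1) ^ k * ((of_nat n + of_nat k - 1) gchoose k)"
    by (rule gbinomial_minus)
  also have "(of_nat n + of_nat k - 1 :: 'a) = of_nat (n + k - 1)" using assms by simp
  also have "(of_nat (n + k - 1) gchoose k :: 'a) = of_nat ((n + k - 1) choose k)"
    by (simp add: binomial_gbinomial)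
  also have "(n + k - 1) choose k = (n + k - 1) choose (n - 1)"
    using binomial_symmetric[of k "n + k - 1"] assms by simp
  finally show ?thesis .
qed

lemma inverse_power_nth:
  fixes G :: "'a::field_char_0 fps"
  assumes G0: "G $ 0 \<noteq> 0" and n: "n \<ge> 1"
  shows "(inverse G ^ n) $ d = inverse (G $ 0) ^ n * (\<Sum>k=0..d. of_nat ((n + k - 1) choose (n - 1)) *
     (\<Sum>j=0..k. (-1) ^ j * inverse (G $ 0) ^ j * of_nat (k choose j) * (G ^ j) $ d))"
proof -
  define a where "a = G $ 0"
  define H where "H = fps_const (inverse a) * G - 1"
  have H_power: "(H ^ k) $ d = (\<Sum>j=0..k. of_nat (k choose j) * (-1) ^ (k - j) * inverse a ^ j * (G ^ j) $ d)"
    for k unfolding H_def fps_scaled_minus_one_power_nth atLeast0AtMost ..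
  have "(inverse G ^ n) $ d = inverse a ^ n * (\<Sum>k=0..d. ((- of_nat n) gchoose k) * (H ^ k) $ d)"
    using inverse_power_as_binomial_compose[OF G0, of n] by (simp add: a_def H_def fps_compose_nth)
  also have "(\<Sum>k=0..d. ((- of_nat n) gchoose k) * (H ^ k) $ d) = (\<Sum>k=0..d. of_nat ((n + k - 1) choose (n - 1)) *
     (\<Sum>j=0..k. (-1) ^ j * inverse a ^ j * of_nat (k choose j) * (G ^ j) $ d))"
    unfolding gbinomial_minus_of_nat[OF n] H_power sum_distrib_left
    by (intro sum.cong refl) (auto simp: minus_one_power_diff[symmetric] algebra_simps)
  finally show ?thesis by (simp add: a_def)
qed

(* The same coefficients for G = F / x, expressed through the composita of F;
   for d \<ge> 1 the terms with j = 0 or k = 0 vanish. *)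
lemma inverse_power_nth_composita:
  fixes F :: "'a::field_char_0 fps"
  assumes F0: "F $ 0 = 0" and F1: "F $ 1 \<noteq> 0" and n: "n \<ge> 1" and d: "d \<ge> 1"
  shows "(inverse (fps_shift 1 F) ^ n) $ d = inverse (F $ 1) ^ n *
    (\<Sum>k=1..d. of_nat ((n + k - 1) choose (n - 1)) *
      (\<Sum>j=1..k. (-1) ^ j / (F $ 1) ^ j * of_nat (k choose j) * composita F (d + j) j))"
proof -
  define G where "G = fps_shift 1 F"
  have G0: "G $ 0 = F $ 1" by (simp add: G_def)
  have inner: "(\<Sum>j=0..k. (-1) ^ j * inverse (F $ 1) ^ j * of_nat (k choose j) * (G ^ j) $ d)
      = (\<Sum>j=1..k. (-1) ^ j / (F $ 1) ^ j * of_nat (k choose j) * composita F (d + j) j)" for k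
    using d by (simp add: sum.atLeast_Suc_atMost G0 composita_shift[OF F0] G_def power_inverse divide_inverse)
  have "(inverse G ^ n) $ d = inverse (F $ 1) ^ n * (\<Sum>k=0..d. of_nat ((n + k - 1) choose (n - 1)) *
     (\<Sum>j=0..k. (-1) ^ j * inverse (F $ 1) ^ j * of_nat (k choose j) * (G ^ j) $ d))"
    using inverse_power_nth[of G n d] F1 n by (simp add: G0)
  also have "\<dots> = inverse (F $ 1) ^ n * (\<Sum>k=0..d. of_nat ((n + k - 1) choose (n - 1)) *
      (\<Sum>j=1..k. (-1) ^ j / (F $ 1) ^ j * of_nat (k choose j) * composita F (d + j) j))"
    by (simp only: inner)
  finally show ?thesis by (simp add: G_def sum.atLeast_Suc_atMost)
qed

theorem theorem3:
  fixes F A :: "'a::field_char_0 fps" and n m :: nat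
  assumes F0: "fps_nth F 0 = 0"
    and F1: "fps_nth F 1 \<noteq> 0"
    and A0: "fps_nth A 0 = 0"
    and inv: "fps_compose F A = fps_X"
    and m1: "1 \<le> m" and mn: "m \<le> n"
  shows "composita A n m =
    (if n = m then 1 / composita F 1 1 ^ n
     else of_nat m / (of_nat n * composita F 1 1 ^ n) *
       (\<Sum>k=1..n-m. of_nat ((n+k-1) choose (n-1)) *
          (\<Sum>j=1..k. (-1)^j / composita F 1 1 ^ j * of_nat (k choose j)
                        * composita F (n-m+j) j)))"
proof -
  define G where "G = fps_shift 1 F"
  have n: "n \<ge> 1" using m1 mn by simp
  have c11: "composita F 1 1 = F $ 1" using composita_power[OF F0, of 1 1] by simp
  have "of_nat n * composita A n m = of_nat m * (inverse G ^ n) $ (n - m)"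
    using lagrange_inversion[OF F0 F1 A0 inv m1 mn] composita_power[OF A0] by (simp add: G_def)
  then have lagrange: "composita A n m = of_nat m / of_nat n * (inverse G ^ n) $ (n - m)"
    using n by (simp add: field_simps)
  show ?thesis
  proof (cases "n = m")
    case True
    have "(inverse G ^ n) $ 0 = inverse (F $ 1) ^ n" by (simp add: fps_nth_power_0 G_def)
    then show ?thesis using True n F1 lagrange c11 by (simp add: power_inverse divide_inverse)
  next
    case False
    then show ?thesis
      using lagrange inverse_power_nth_composita[OF F0 F1 n, of "n - m"] mn
      unfolding c11 G_def by (simp add: power_inverse divide_inverse mult_ac)
  qed
qed

end
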